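(* Under the sampling setup and partitioning cost model described in the context, let $\bar c:=n+\min\{k,n-k\}-s+2gn/s$. Then $$\mathrm{P}[c\le\bar c]\ge 1-e^{-2g^2/s}\qquad\text{and}\qquad \mathrm{E}\,c\le \bar c+2(n-s)e^{-2g^2/s}.$$
   Context: Sampling setup. Let $X=(x_1,\dots,x_n)$ be a list of $n\ge 2$ elements of a totally ordered set; repeated values are allowed. Let $x_1^*\le\dots\le x_n^*$ be these elements in sorted order. Let $k$ be an integer with $1\le k\le n$, let $s$ be an integer with $1\le s\le n-1$, and let $g>0$ be real. A set $I\subset\{1,\dots,n\}$ of $s$ positions is chosen uniformly at random among all $s$-element subsets. The sample $S=(x_j)_{j\in I}$ has sorted elements $y_1^*\le\dots\le y_s^*$. Define $i_u:=\max\{\lceil ks/n-g\rceil,1\}$, $i_v:=\min\{\lceil ks/n+g\rceil,s\}$, $u:=y_{i_u}^*$ and $v:=y_{i_v}^*$. Partitioning cost model. Each element $x_j$ with $j\notin I$ is compared with the pivots as follows. - If $k<n/2$: $x_j$ is compared with $v$ first, and with $u$ only if $x_j<v$ and $u<v$. - If $k\ge n/2$: $x_j$ is compared with $u$ first, and with $v$ only if $x_j>u$ and $u<v$. Elements of the sample are not compared. Thus the number $c$ of comparisons is: - $c=n-s$ if $u=v$; - $c=(n-s)+|\{j\notin I: x_j<v\}|$ if $u<v$ and $k<n/2$; - $c=(n-s)+|\{j\notin I: x_j>u\}|$ if $u<v$ and $k\ge n/2$. $\mathrm{P}$ and $\mathrm{E}$ denote probability and expectation with respect to the random choice of $I$.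 *)

theory Defs
  imports "HOL-Probability.Probability"
begin

text \<open>The list X = (x_1,...,x_n) is modelled as a function x on the positions {1..n}.\<close>

definition sample_sorted :: "(nat \<Rightarrow> 'a::linorder) \<Rightarrow> nat set \<Rightarrow> 'a list" where
  "sample_sorted x I = sort (map x (sorted_list_of_set I))"

definition ystar :: "(nat \<Rightarrow> 'a::linorder) \<Rightarrow> nat set \<Rightarrow> nat \<Rightarrow> 'a" where
  "ystar x I i = sample_sorted x I ! (i - 1)"

definition idx_u :: "nat \<Rightarrow> nat \<Rightarrow> nat \<Rightarrow> real \<Rightarrow> nat" where
  "idx_u n k s g = nat (max (\<lceil>real k * real s / real n - g\<rceil>) 1)"

definition idx_v :: "nat \<Rightarrow> nat \<Rightarrow> nat \<Rightarrow> real \<Rightarrow> nat" where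
  "idx_v n k s g = nat (min (\<lceil>real k * real s / real n + g\<rceil>) (int s))"

definition pivot_u :: "(nat \<Rightarrow> 'a::linorder) \<Rightarrow> nat \<Rightarrow> nat \<Rightarrow> nat \<Rightarrow> real \<Rightarrow> nat set \<Rightarrow> 'a" where
  "pivot_u x n k s g I = ystar x I (idx_u n k s g)"

definition pivot_v :: "(nat \<Rightarrow> 'a::linorder) \<Rightarrow> nat \<Rightarrow> nat \<Rightarrow> nat \<Rightarrow> real \<Rightarrow> nat set \<Rightarrow> 'a" where
  "pivot_v x n k s g I = ystar x I (idx_v n k s g)"

definition cost :: "(nat \<Rightarrow> 'a::linorder) \<Rightarrow> nat \<Rightarrow> nat \<Rightarrow> nat \<Rightarrow> real \<Rightarrow> nat set \<Rightarrow> nat" where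
  "cost x n k s g I =
     (let u = pivot_u x n k s g I; v = pivot_v x n k s g I in
      if u = v then n - s
      else if u < v \<and> real k < real n / 2 then (n - s) + card {j \<in> {1..n} - I. x j < v}
      else if u < v \<and> real k \<ge> real n / 2 then (n - s) + card {j \<in> {1..n} - I. u < x j}
      else undefined)"

definition sample_pmf :: "nat \<Rightarrow> nat \<Rightarrow> nat set pmf" where
  "sample_pmf n s = pmf_of_set {I. I \<subseteq> {1..n} \<and> card I = s}"

end

theory Submission
  imports Defs
begin

text \<open>
  For k < n/2 the cost exceeds cbar only if more than m = k + 2gn/s positions j satisfy x_j < v,
  although by the choice of v at most i_v - 1 < ks/n + g sample elements do. As I varies, the
  sets {j. x_j < v} form a chain, so every such sample meets the smallest of them that has more
  than m elements, B, in fewer than |B|s/n - g points. By Hoeffding's inequality for sampling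
  without replacement (the hypergeometric moment generating function is dominated by the
  binomial one) this has probability at most exp(-2g^2/s). The case k >= n/2 is symmetric,
  with u and the sets {j. u < x_j}. As c <= 2(n - s) always, the expectation bound follows.
\<close>

lemma card_supersets_of_card:
  assumes "finite N" "T \<subseteq> N" "card T \<le> s"
  shows "card {I. I \<subseteq> N \<and> card I = s \<and> T \<subseteq> I} = (card N - card T) choose (s - card T)"
proof -
  have "finite T" using assms finite_subset by blast
  have "{I. I \<subseteq> N \<and> card I = s \<and> T \<subseteq> I} = (\<lambda>J. J \<union> T) ` {J. J \<subseteq> N - T \<and> card J = s - card T}"
    (is "?supersets = (\<lambda>J. J \<union> T) ` ?complements")
  proof (intro set_eqI iffI)
    fix I assume I: "I \<in> ?supersets"
    then have "finite I" using assms(1) finite_subset by blast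
    with I \<open>finite T\<close> have "card (I - T) = s - card T" "I = (I - T) \<union> T"
      by (auto simp: card_Diff_subset)
    with I show "I \<in> (\<lambda>J. J \<union> T) ` ?complements" by blast
  next
    fix I assume "I \<in> (\<lambda>J. J \<union> T) ` ?complements"
    then obtain J where J: "J \<subseteq> N - T" "card J = s - card T" "I = J \<union> T" by auto
    have "finite J" "J \<inter> T = {}" using J(1) assms(1) finite_subset by auto
    with J \<open>finite T\<close> assms show "I \<in> ?supersets"
      by (auto simp: card_Un_disjoint)
  qed
  moreover have "inj_on (\<lambda>J. J \<union> T) ?complements"
    by (rule inj_onI) blast
  ultimately have "card ?supersets = card ?complements"
    by (simp add: card_image)
  also have "\<dots> = (card N - card T) choose (s - card T)"
    using assms \<open>finite T\<close> by (simp add: n_subsets card_Diff_subset)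
  finally show ?thesis .
qed

lemma sum_card_Int_choose:
  assumes "finite N" "A \<subseteq> N" "j \<le> s"
  shows "(\<Sum>I | I \<subseteq> N \<and> card I = s. card (A \<inter> I) choose j)
         = (card A choose j) * ((card N - j) choose (s - j))"
proof -
  define S where "S = {I. I \<subseteq> N \<and> card I = s}"
  define U where "U = {T. T \<subseteq> A \<and> card T = j}"
  have "finite A" using assms finite_subset by blast
  have "finite S" "finite U" unfolding S_def U_def using assms \<open>finite A\<close> by auto
  have "(\<Sum>I\<in>S. card (A \<inter> I) choose j) = (\<Sum>I\<in>S. card {T \<in> U. T \<subseteq> I})"
  proof (rule sum.cong[OF refl])
    fix I
    have "{T \<in> U. T \<subseteq> I} = {T. T \<subseteq> A \<inter> I \<and> card T = j}" unfolding U_def by auto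
    then show "card (A \<inter> I) choose j = card {T \<in> U. T \<subseteq> I}"
      using n_subsets[of "A \<inter> I" j] \<open>finite A\<close> by simp
  qed
  also have "\<dots> = (\<Sum>T\<in>U. card {I \<in> S. T \<subseteq> I})"
    using sum.swap_restrict[OF \<open>finite S\<close> \<open>finite U\<close>, of "\<lambda>_ _. 1::nat" "\<lambda>I T. T \<subseteq> I"] by simp
  also have "\<dots> = (\<Sum>T\<in>U. (card N - j) choose (s - j))"
  proof (rule sum.cong[OF refl])
    fix T assume "T \<in> U"
    then have "card {I. I \<subseteq> N \<and> card I = s \<and> T \<subseteq> I} = (card N - j) choose (s - j)"
      using assms card_supersets_of_card[of N T s] unfolding U_def by auto
    then show "card {I \<in> S. T \<subseteq> I} = (card N - j) choose (s - j)"
      unfolding S_def by simp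
  qed
  also have "\<dots> = (card A choose j) * ((card N - j) choose (s - j))"
    unfolding U_def using \<open>finite A\<close> by (simp add: n_subsets)
  finally show ?thesis unfolding S_def .
qed

lemma binomial_mult_power_le:
  fixes a n j :: nat
  assumes "a \<le> n"
  shows "(a choose j) * n ^ j \<le> (n choose j) * a ^ j"
proof (induction j)
  case 0
  then show ?case by simp
next
  case (Suc j)
  have step: "(m choose Suc j) * Suc j = (m choose j) * (m - j)" for m
    using binomial_absorption[of j m] binomial_absorb_comp[of m j] by (simp add: mult.commute)
  have "j * a \<le> j * n"
    using assms by simp
  then have "(a - j) * n \<le> (n - j) * a"
    by (simp add: diff_mult_distrib mult.commute[of n a] diff_le_mono2)
  then have "(a choose j) * n ^ j * ((a - j) * n) \<le> (n choose j) * a ^ j * ((n - j) * a)"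
    using Suc.IH by (rule mult_le_mono[rotated])
  then have "((a choose j) * (a - j)) * n ^ Suc j \<le> ((n choose j) * (n - j)) * a ^ Suc j"
    by (simp only: power_Suc mult_ac)
  then have "(a choose Suc j) * n ^ Suc j * Suc j \<le> (n choose Suc j) * a ^ Suc j * Suc j"
    by (simp only: step[symmetric] mult_ac)
  then show ?case
    by (simp only: mult_le_cancel2)
qed

lemma binomial_le_power_ratio:
  fixes a n j :: nat
  assumes "a \<le> n"
  shows "real (a choose j) \<le> real (n choose j) * (real a / real n) ^ j"
proof (cases "n = 0")
  case True
  with assms show ?thesis by (cases j) auto
next
  case False
  have "real (a choose j) * real n ^ j \<le> real (n choose j) * real a ^ j"
    using binomial_mult_power_le[OF assms, of j] by (metis of_nat_le_iff of_nat_mult of_nat_power)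
  with False show ?thesis by (simp add: power_divide field_simps)
qed

lemma hypergeometric_term_le:
  fixes a n s j :: nat
  assumes "a \<le> n" "j \<le> s" "s \<le> n"
  shows "real ((a choose j) * ((n - j) choose (s - j)))
         \<le> real (n choose s) * real (s choose j) * (real a / real n) ^ j"
proof -
  have "real ((a choose j) * ((n - j) choose (s - j)))
        \<le> real (n choose j) * (real a / real n) ^ j * real ((n - j) choose (s - j))"
    using binomial_le_power_ratio[OF assms(1)] by (simp add: mult_right_mono)
  also have "\<dots> = real ((n choose s) * (s choose j)) * (real a / real n) ^ j"
    using choose_mult[OF assms(2,3)] by (metis of_nat_mult mult.commute mult.left_commute)
  finally show ?thesis by simp
qed

text \<open>Up to the factor \<open>card N choose s\<close>, the left side is the moment generating function
  of the hypergeometric distribution and the right side that of the binomial one.\<close>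

lemma sum_power_card_Int_le:
  fixes w :: real
  assumes "finite N" "A \<subseteq> N" "s \<le> card N" "w \<ge> 0"
  shows "(\<Sum>I | I \<subseteq> N \<and> card I = s. (1 + w) ^ card (A \<inter> I))
         \<le> real (card N choose s) * (1 + w * real (card A) / real (card N)) ^ s"
proof -
  define S where "S = {I. I \<subseteq> N \<and> card I = s}"
  define n a where "n = card N" and "a = card A"
  have "a \<le> n" unfolding a_def n_def using assms card_mono by blast
  have binomial: "(1 + w) ^ m = (\<Sum>j\<le>s. real (m choose j) * w ^ j)" if "m \<le> s" for m
  proof -
    have "(1 + w) ^ m = (\<Sum>j\<le>m. real (m choose j) * w ^ j)"
      using binomial_ring[of w 1 m] by (simp add: add.commute)
    also have "\<dots> = (\<Sum>j\<le>s. real (m choose j) * w ^ j)"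
      using that by (intro sum.mono_neutral_left) auto
    finally show ?thesis .
  qed
  have "card (A \<inter> I) \<le> s" if "I \<in> S" for I
    using that assms(1) unfolding S_def by (metis (mono_tags) card_mono finite_subset inf_le2 mem_Collect_eq)
  then have "(\<Sum>I\<in>S. (1 + w) ^ card (A \<inter> I))
             = (\<Sum>I\<in>S. \<Sum>j\<le>s. real (card (A \<inter> I) choose j) * w ^ j)"
    by (simp add: binomial)
  also have "\<dots> = (\<Sum>j\<le>s. w ^ j * real (\<Sum>I\<in>S. card (A \<inter> I) choose j))"
    by (subst sum.swap) (simp add: sum_distrib_left mult.commute)
  also have "\<dots> = (\<Sum>j\<le>s. w ^ j * real ((a choose j) * ((n - j) choose (s - j))))"
    unfolding S_def a_def n_def using assms by (simp add: sum_card_Int_choose)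
  also have "\<dots> \<le> (\<Sum>j\<le>s. w ^ j * (real (n choose s) * real (s choose j) * (real a / real n) ^ j))"
    using assms \<open>a \<le> n\<close> unfolding n_def
    by (intro sum_mono mult_left_mono hypergeometric_term_le) auto
  also have "\<dots> = real (n choose s) * (\<Sum>j\<le>s. real (s choose j) * (w * real a / real n) ^ j * 1 ^ (s - j))"
    by (simp add: sum_distrib_left power_divide power_mult_distrib mult_ac)
  also have "\<dots> = real (n choose s) * (1 + w * real a / real n) ^ s"
    using binomial_ring[of "w * real a / real n" 1 s] by (simp add: add.commute)
  finally show ?thesis unfolding S_def a_def n_def .
qed

lemma card_samples_upper_tail:
  fixes t :: real
  assumes "finite N" "A \<subseteq> N" "1 \<le> s" "s \<le> card N" "t \<ge> 0"
  shows "real (card {I. I \<subseteq> N \<and> card I = s \<and>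
                        real (card A) * real s / real (card N) + t \<le> real (card (A \<inter> I))})
         \<le> exp (- 2 * t\<^sup>2 / real s) * real (card {I. I \<subseteq> N \<and> card I = s})"
proof -
  define S where "S = {I. I \<subseteq> N \<and> card I = s}"
  define n a where "n = card N" and "a = card A"
  define c where "c = real a * real s / real n + t"
  define F where "F = {I. I \<subseteq> N \<and> card I = s \<and> c \<le> real (card (A \<inter> I))}"
  \<comment> \<open>Chernoff's method; \<open>h\<close> minimises the exponent obtained from Hoeffding's lemma.\<close>
  define p h where "p = real a / real n" and "h = 4 * t / real s"
  have "n > 0" "real s > 0" unfolding n_def using assms by auto
  have "h \<ge> 0" "p \<ge> 0" unfolding h_def p_def using assms by auto
  have "finite S" "F \<subseteq> S" unfolding S_def F_def using assms(1) by auto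
  have hoeffding: "1 + p * (exp h - 1) \<le> exp (h * p + h\<^sup>2 / 8)"
  proof -
    have "0 < 1 + p * (exp h - 1)"
      using \<open>h \<ge> 0\<close> \<open>p \<ge> 0\<close> by (simp add: add_pos_nonneg)
    moreover have "ln (1 + p * (exp h - 1)) \<le> h * p + h\<^sup>2 / 8"
      using Hoeffdings_lemma_aux[OF \<open>h \<ge> 0\<close> \<open>p \<ge> 0\<close>] by simp
    ultimately show ?thesis by (metis exp_le_cancel_iff exp_ln)
  qed
  have "real s * (h * p + h\<^sup>2 / 8) = - 2 * t\<^sup>2 / real s + h * c"
    unfolding h_def c_def p_def using \<open>n > 0\<close> \<open>real s > 0\<close>
    by (simp add: field_simps power2_eq_square)
  then have exponent: "exp (h * p + h\<^sup>2 / 8) ^ s = exp (- 2 * t\<^sup>2 / real s) * exp (h * c)"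
    by (metis exp_of_nat_mult exp_add)
  have "real (card F) * exp (h * c) = (\<Sum>I\<in>F. exp (h * c))"
    by simp
  also have "\<dots> \<le> (\<Sum>I\<in>F. exp h ^ card (A \<inter> I))"
  proof (rule sum_mono)
    fix I assume "I \<in> F"
    then have "h * c \<le> h * real (card (A \<inter> I))"
      unfolding F_def using \<open>h \<ge> 0\<close> by (simp add: mult_left_mono)
    then show "exp (h * c) \<le> exp h ^ card (A \<inter> I)"
      by (simp add: exp_of_nat_mult[symmetric] mult.commute)
  qed
  also have "\<dots> \<le> (\<Sum>I\<in>S. exp h ^ card (A \<inter> I))"
    using \<open>finite S\<close> \<open>F \<subseteq> S\<close> by (intro sum_mono2) auto
  also have "\<dots> \<le> real (n choose s) * (1 + p * (exp h - 1)) ^ s"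
    using sum_power_card_Int_le[OF assms(1-2,4), of "exp h - 1"] \<open>h \<ge> 0\<close>
    unfolding S_def n_def a_def p_def by (simp add: mult.commute)
  also have "\<dots> \<le> real (n choose s) * exp (h * p + h\<^sup>2 / 8) ^ s"
    using hoeffding \<open>h \<ge> 0\<close> \<open>p \<ge> 0\<close> by (intro mult_left_mono power_mono) auto
  also have "\<dots> = real (card S) * exp (- 2 * t\<^sup>2 / real s) * exp (h * c)"
    unfolding S_def n_def using assms(1)
    by (simp add: n_subsets exponent)
  finally have "real (card F) \<le> exp (- 2 * t\<^sup>2 / real s) * real (card S)"
    by (simp add: mult.commute)
  then show ?thesis unfolding F_def S_def c_def n_def a_def .
qed

lemma card_samples_lower_tail:
  fixes t :: real
  assumes "finite N" "B \<subseteq> N" "1 \<le> s" "s \<le> card N" "t \<ge> 0"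
  shows "real (card {I. I \<subseteq> N \<and> card I = s \<and>
                        real (card (B \<inter> I)) \<le> real (card B) * real s / real (card N) - t})
         \<le> exp (- 2 * t\<^sup>2 / real s) * real (card {I. I \<subseteq> N \<and> card I = s})"
proof -
  have "card B \<le> card N" "0 < card N"
    using assms card_mono by auto
  have "{I. I \<subseteq> N \<and> card I = s \<and> real (card (B \<inter> I)) \<le> real (card B) * real s / real (card N) - t}
        \<subseteq> {I. I \<subseteq> N \<and> card I = s \<and>
               real (card (N - B)) * real s / real (card N) + t \<le> real (card ((N - B) \<inter> I))}"
    (is "?lower \<subseteq> ?upper")
  proof safe
    fix I assume I: "I \<subseteq> N" "real (card (B \<inter> I)) \<le> real (card B) * real (card I) / real (card N) - t"
    have "finite I" using I(1) assms(1) finite_subset by blast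
    moreover have "(N - B) \<inter> I = I - B \<inter> I"
      using I(1) by blast
    ultimately have "card (B \<inter> I) \<le> card I" "card ((N - B) \<inter> I) = card I - card (B \<inter> I)"
      by (simp_all add: card_mono card_Diff_subset)
    moreover have "card (N - B) = card N - card B"
      using assms by (simp add: card_Diff_subset finite_subset)
    ultimately show "real (card (N - B)) * real (card I) / real (card N) + t \<le> real (card ((N - B) \<inter> I))"
      using I(2) \<open>card B \<le> card N\<close> \<open>0 < card N\<close> by (simp add: of_nat_diff field_simps)
  qed
  then have "card ?lower \<le> card ?upper"
    using assms(1) by (intro card_mono) auto
  also note card_samples_upper_tail[OF assms(1) Diff_subset assms(3-5)]
  finally show ?thesis by simp
qed

lemma card_samples_large_chain_set_le:
  fixes D :: "nat set \<Rightarrow> nat set" and m g :: real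
  assumes "finite N" "1 \<le> s" "s \<le> card N" "g \<ge> 0"
    and subset: "\<And>I. I \<subseteq> N \<Longrightarrow> card I = s \<Longrightarrow> D I \<subseteq> N"
    and chain: "\<And>I J. I \<subseteq> N \<Longrightarrow> card I = s \<Longrightarrow> J \<subseteq> N \<Longrightarrow> card J = s \<Longrightarrow>
                        D I \<subseteq> D J \<or> D J \<subseteq> D I"
    and sparse: "\<And>I. I \<subseteq> N \<Longrightarrow> card I = s \<Longrightarrow> card (D I \<inter> I) \<le> q"
    and q: "real q \<le> m * real s / real (card N) - g"
  shows "real (card {I. I \<subseteq> N \<and> card I = s \<and> m < real (card (D I))})
         \<le> exp (- 2 * g\<^sup>2 / real s) * real (card {I. I \<subseteq> N \<and> card I = s})"
proof (cases "\<exists>I. I \<subseteq> N \<and> card I = s \<and> m < real (card (D I))")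
  case False
  then have no_large: "{I. I \<subseteq> N \<and> card I = s \<and> m < real (card (D I))} = {}"
    by auto
  show ?thesis
    unfolding no_large by simp
next
  case True
  then obtain I\<^sub>0 where I\<^sub>0: "I\<^sub>0 \<subseteq> N" "card I\<^sub>0 = s" "m < real (card (D I\<^sub>0))"
    and least: "\<forall>J. J \<subseteq> N \<and> card J = s \<and> m < real (card (D J)) \<longrightarrow> card (D I\<^sub>0) \<le> card (D J)"
    using ex_has_least_nat[where m = "\<lambda>I. card (D I)"
                                 and P = "\<lambda>I. I \<subseteq> N \<and> card I = s \<and> m < real (card (D I))"]
    by blast
  \<comment> \<open>By the chain property, \<open>B\<close> lies inside every \<open>D I\<close> with more than \<open>m\<close> elements.\<close>
  define B where "B = D I\<^sub>0"
  have "B \<subseteq> N" "finite B"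
    unfolding B_def using subset[OF I\<^sub>0(1,2)] assms(1) finite_subset by auto
  have "{I. I \<subseteq> N \<and> card I = s \<and> m < real (card (D I))}
        \<subseteq> {I. I \<subseteq> N \<and> card I = s \<and> real (card (B \<inter> I)) \<le> real (card B) * real s / real (card N) - g}"
    (is "?large \<subseteq> ?sparse")
  proof (intro subsetI, elim CollectE conjE, intro CollectI conjI)
    fix I assume I: "I \<subseteq> N" "card I = s" "m < real (card (D I))"
    have "finite (D I)"
      using subset[OF I(1,2)] assms(1) finite_subset by blast
    have "B \<subseteq> D I"
      using chain[OF I\<^sub>0(1,2) I(1,2)] least I card_seteq[OF \<open>finite B\<close>] unfolding B_def by blast
    then have "card (B \<inter> I) \<le> card (D I \<inter> I)"
      using \<open>finite (D I)\<close> by (intro card_mono) auto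
    then have "card (B \<inter> I) \<le> q"
      using sparse[OF I(1,2)] by linarith
    moreover have "m * real s / real (card N) \<le> real (card B) * real s / real (card N)"
      using I\<^sub>0(3) unfolding B_def by (simp add: divide_right_mono mult_right_mono)
    ultimately show "real (card (B \<inter> I)) \<le> real (card B) * real s / real (card N) - g"
      using q by linarith
  qed auto
  then have "card ?large \<le> card ?sparse"
    using assms(1) by (intro card_mono) auto
  also note card_samples_lower_tail[OF assms(1) \<open>B \<subseteq> N\<close> assms(2,3,4)]
  finally show ?thesis by simp
qed

lemma sorted_sample_sorted: "sorted (sample_sorted x I)"
  unfolding sample_sorted_def by simp

lemma length_sample_sorted: "finite I \<Longrightarrow> length (sample_sorted x I) = card I"
  unfolding sample_sorted_def by simp

lemma length_filter_sample_sorted: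
  assumes "finite I"
  shows "length (filter P (sample_sorted x I)) = card {j \<in> I. P (x j)}"
proof -
  have "length (filter P (sample_sorted x I)) = length (filter (P \<circ> x) (sorted_list_of_set I))"
    unfolding sample_sorted_def by (simp add: filter_sort filter_map)
  also have "\<dots> = card {j \<in> I. P (x j)}"
    using assms by (simp add: distinct_length_filter Int_def conj_commute)
  finally show ?thesis .
qed

lemma length_filter_less_nth:
  fixes ys :: "'a::linorder list"
  assumes "sorted ys" "i < length ys"
  shows "length (filter (\<lambda>y. y < ys ! i) ys) \<le> i"
proof -
  have "{k. k < length ys \<and> ys ! k < ys ! i} \<subseteq> {..<i}"
    using assms by clarsimp (metis not_le sorted_nth_mono)
  then show ?thesis
    unfolding length_filter_conv_card by (metis card_lessThan card_mono finite_lessThan)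
qed

lemma length_filter_greater_nth:
  fixes ys :: "'a::linorder list"
  assumes "sorted ys" "i < length ys"
  shows "length (filter (\<lambda>y. ys ! i < y) ys) \<le> length ys - Suc i"
proof -
  have "{k. k < length ys \<and> ys ! i < ys ! k} \<subseteq> {Suc i..<length ys}"
    using assms by clarsimp (metis not_less_eq_eq leD sorted_nth_mono)
  then show ?thesis
    unfolding length_filter_conv_card by (metis card_atLeastLessThan card_mono finite_atLeastLessThan)
qed

lemma ystar_mono:
  assumes "finite I" "1 \<le> i" "i \<le> i'" "i' \<le> card I"
  shows "ystar x I i \<le> ystar x I i'"
  unfolding ystar_def using assms
  by (intro sorted_nth_mono) (auto simp: sorted_sample_sorted length_sample_sorted)

lemma card_less_ystar:
  assumes "finite I" "1 \<le> i" "i \<le> card I"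
  shows "card {j \<in> I. x j < ystar x I i} \<le> i - 1"
proof -
  have "card {j \<in> I. x j < ystar x I i}
        = length (filter (\<lambda>y. y < sample_sorted x I ! (i - 1)) (sample_sorted x I))"
    using length_filter_sample_sorted[OF assms(1), of "\<lambda>y. y < ystar x I i" x]
    by (simp add: ystar_def)
  also have "\<dots> \<le> i - 1"
    using assms by (intro length_filter_less_nth) (auto simp: sorted_sample_sorted length_sample_sorted)
  finally show ?thesis .
qed

lemma card_greater_ystar:
  assumes "finite I" "1 \<le> i" "i \<le> card I"
  shows "card {j \<in> I. ystar x I i < x j} \<le> card I - i"
proof -
  have "card {j \<in> I. ystar x I i < x j}
        = length (filter (\<lambda>y. sample_sorted x I ! (i - 1) < y) (sample_sorted x I))"
    using length_filter_sample_sorted[OF assms(1), of "\<lambda>y. ystar x I i < y" x]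
    by (simp add: ystar_def)
  also have "\<dots> \<le> card I - i"
    using assms length_filter_greater_nth[OF sorted_sample_sorted, of "i - 1" x I]
    by (simp add: length_sample_sorted)
  finally show ?thesis .
qed

lemma idx_bounds:
  fixes n k s :: nat and g :: real
  assumes "1 \<le> k" "k \<le> n" "1 \<le> s" "g > 0"
  shows "1 \<le> idx_u n k s g" and "idx_u n k s g \<le> idx_v n k s g" and "idx_v n k s g \<le> s"
    and "real (idx_v n k s g) < real k * real s / real n + g + 1"
    and "real k * real s / real n - g \<le> real (idx_u n k s g)"
proof -
  define r where "r = real k * real s / real n"
  have "0 < r" "r \<le> real s"
    using assms unfolding r_def by (auto simp: field_simps mult_right_mono)
  then have "1 \<le> \<lceil>r + g\<rceil>" "\<lceil>r - g\<rceil> \<le> int s"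
    using assms(4) by (auto simp: ceiling_le_iff)
  moreover have "\<lceil>r - g\<rceil> \<le> \<lceil>r + g\<rceil>"
    using assms(4) by (intro ceiling_mono) simp
  moreover have "of_int \<lceil>r + g\<rceil> < r + g + 1"
    by linarith
  ultimately show "1 \<le> idx_u n k s g" "idx_u n k s g \<le> idx_v n k s g" "idx_v n k s g \<le> s"
    "real (idx_v n k s g) < r + g + 1"
    using assms(3) unfolding idx_u_def idx_v_def r_def[symmetric] by (auto simp: nat_le_iff)
  have "r - g \<le> of_int (max \<lceil>r - g\<rceil> 1)"
    by (meson le_of_int_ceiling max.cobounded1 of_int_le_iff order_trans)
  then show "r - g \<le> real (idx_u n k s g)"
    unfolding idx_u_def r_def[symmetric] by simp
qed

text \<open>The definition of \<open>cost\<close> leaves the case u > v undefined; this lemma excludes it.\<close>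

lemma pivot_u_le_pivot_v:
  assumes "1 \<le> k" "k \<le> n" "1 \<le> s" "g > 0" "finite I" "card I = s"
  shows "pivot_u x n k s g I \<le> pivot_v x n k s g I"
  unfolding pivot_u_def pivot_v_def using idx_bounds[OF assms(1-4)] assms(5,6)
  by (intro ystar_mono) auto

lemma cost_le_small_k:
  assumes "pivot_u x n k s g I \<le> pivot_v x n k s g I" "real k < real n / 2"
  shows "cost x n k s g I \<le> (n - s) + card {j \<in> {1..n} - I. x j < pivot_v x n k s g I}"
  using assms unfolding cost_def Let_def by auto

lemma cost_le_large_k:
  assumes "pivot_u x n k s g I \<le> pivot_v x n k s g I" "\<not> real k < real n / 2"
  shows "cost x n k s g I \<le> (n - s) + card {j \<in> {1..n} - I. pivot_u x n k s g I < x j}"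
  using assms unfolding cost_def Let_def by auto

lemma cost_le_twice:
  assumes "pivot_u x n k s g I \<le> pivot_v x n k s g I" "I \<subseteq> {1..n}" "card I = s"
  shows "cost x n k s g I \<le> 2 * (n - s)"
proof -
  have "card ({1..n} - I) = n - s"
    using assms(2,3) by (simp add: card_Diff_subset finite_subset)
  then have "card {j \<in> {1..n} - I. P j} \<le> n - s" for P
    by (metis (no_types, lifting) card_mono finite_Diff finite_atLeastAtMost mem_Collect_eq subsetI)
  then show ?thesis
    using assms(1) unfolding cost_def Let_def by auto
qed

lemma card_costly_samples_small_k:
  fixes x :: "nat \<Rightarrow> 'a::linorder"
  assumes "1 \<le> k" "k \<le> n" "1 \<le> s" "s \<le> n" "g > 0" "real k < real n / 2"
  shows "real (card {I. I \<subseteq> {1..n} \<and> card I = s \<and>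
                        real n + real k - real s + 2 * g * real n / real s < real (cost x n k s g I)})
         \<le> exp (- 2 * g\<^sup>2 / real s) * real (card {I. I \<subseteq> {1..n} \<and> card I = s})"
proof -
  define D where "D I = {j \<in> {1..n}. x j < pivot_v x n k s g I}" for I
  define m where "m = real k + 2 * g * real n / real s"
  have "{I. I \<subseteq> {1..n} \<and> card I = s \<and>
          real n + real k - real s + 2 * g * real n / real s < real (cost x n k s g I)}
        \<subseteq> {I. I \<subseteq> {1..n} \<and> card I = s \<and> m < real (card (D I))}" (is "?costly \<subseteq> ?large")
  proof (intro subsetI; elim CollectE conjE; intro CollectI conjI)
    fix I assume I: "I \<subseteq> {1..n}" "card I = s"
      and costly: "real n + real k - real s + 2 * g * real n / real s < real (cost x n k s g I)"
    have "card {j \<in> {1..n} - I. x j < pivot_v x n k s g I} \<le> card (D I)"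
      unfolding D_def by (intro card_mono) auto
    then have "cost x n k s g I \<le> (n - s) + card (D I)"
      using cost_le_small_k[OF pivot_u_le_pivot_v[where x = x, OF assms(1-3,5) finite_subset[OF I(1)] I(2)]
                                assms(6)]
      by simp
    then show "m < real (card (D I))"
      using costly assms(4) unfolding m_def by simp
  qed
  then have "card ?costly \<le> card ?large"
    by (intro card_mono) auto
  also have "real (card ?large) \<le> exp (- 2 * g\<^sup>2 / real s) * real (card {I. I \<subseteq> {1..n} \<and> card I = s})"
  proof (rule card_samples_large_chain_set_le[where q = "idx_v n k s g - 1"])
    show "D I \<subseteq> D J \<or> D J \<subseteq> D I" for I J
      unfolding D_def
      by (cases "pivot_v x n k s g I \<le> pivot_v x n k s g J") (auto simp: not_le intro: less_le_trans)
    show "card (D I \<inter> I) \<le> idx_v n k s g - 1" if "I \<subseteq> {1..n}" "card I = s" for I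
    proof -
      have "D I \<inter> I = {j \<in> I. x j < ystar x I (idx_v n k s g)}"
        using that(1) unfolding D_def pivot_v_def by auto
      then show ?thesis
        using card_less_ystar[where x = x and i = "idx_v n k s g", OF finite_subset[OF that(1)]]
          idx_bounds[OF assms(1-3,5)] that(2)
        by auto
    qed
    have "m * real s / real (card {1..n}) - g = real k * real s / real n + g"
      using assms(1-4) unfolding m_def by (simp add: field_simps)
    then show "real (idx_v n k s g - 1) \<le> m * real s / real (card {1..n}) - g"
      using idx_bounds[OF assms(1-3,5)] by simp
  qed (use assms in \<open>auto simp: D_def\<close>)
  finally show ?thesis by simp
qed

lemma card_costly_samples_large_k:
  fixes x :: "nat \<Rightarrow> 'a::linorder"
  assumes "1 \<le> k" "k \<le> n" "1 \<le> s" "s \<le> n" "g > 0" "\<not> real k < real n / 2"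
  shows "real (card {I. I \<subseteq> {1..n} \<and> card I = s \<and>
                        real n + real (n - k) - real s + 2 * g * real n / real s < real (cost x n k s g I)})
         \<le> exp (- 2 * g\<^sup>2 / real s) * real (card {I. I \<subseteq> {1..n} \<and> card I = s})"
proof -
  define D where "D I = {j \<in> {1..n}. pivot_u x n k s g I < x j}" for I
  define m where "m = real (n - k) + 2 * g * real n / real s"
  have "{I. I \<subseteq> {1..n} \<and> card I = s \<and>
          real n + real (n - k) - real s + 2 * g * real n / real s < real (cost x n k s g I)}
        \<subseteq> {I. I \<subseteq> {1..n} \<and> card I = s \<and> m < real (card (D I))}" (is "?costly \<subseteq> ?large")
  proof (intro subsetI; elim CollectE conjE; intro CollectI conjI)
    fix I assume I: "I \<subseteq> {1..n}" "card I = s"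
      and costly: "real n + real (n - k) - real s + 2 * g * real n / real s < real (cost x n k s g I)"
    have "card {j \<in> {1..n} - I. pivot_u x n k s g I < x j} \<le> card (D I)"
      unfolding D_def by (intro card_mono) auto
    then have "cost x n k s g I \<le> (n - s) + card (D I)"
      using cost_le_large_k[OF pivot_u_le_pivot_v[where x = x, OF assms(1-3,5) finite_subset[OF I(1)] I(2)]
                                assms(6)]
      by simp
    then show "m < real (card (D I))"
      using costly assms(4) unfolding m_def by simp
  qed
  then have "card ?costly \<le> card ?large"
    by (intro card_mono) auto
  also have "real (card ?large) \<le> exp (- 2 * g\<^sup>2 / real s) * real (card {I. I \<subseteq> {1..n} \<and> card I = s})"
  proof (rule card_samples_large_chain_set_le[where q = "s - idx_u n k s g"])
    show "D I \<subseteq> D J \<or> D J \<subseteq> D I" for I J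
      unfolding D_def
      by (cases "pivot_u x n k s g I \<le> pivot_u x n k s g J") (auto simp: not_le intro: le_less_trans)
    show "card (D I \<inter> I) \<le> s - idx_u n k s g" if "I \<subseteq> {1..n}" "card I = s" for I
    proof -
      have "D I \<inter> I = {j \<in> I. ystar x I (idx_u n k s g) < x j}"
        using that(1) unfolding D_def pivot_u_def by auto
      then show ?thesis
        using card_greater_ystar[where x = x and i = "idx_u n k s g", OF finite_subset[OF that(1)]]
          idx_bounds[OF assms(1-3,5)] that(2) by auto
    qed
    have "m * real s / real (card {1..n}) - g = real s - real k * real s / real n + g"
      using assms(1-4) unfolding m_def by (simp add: field_simps)
    then show "real (s - idx_u n k s g) \<le> m * real s / real (card {1..n}) - g"
      using idx_bounds[OF assms(1-3,5)] by simp
  qed (use assms in \<open>auto simp: D_def\<close>)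
  finally show ?thesis by simp
qed

lemma card_costly_samples_le:
  fixes x :: "nat \<Rightarrow> 'a::linorder"
  assumes "1 \<le> k" "k \<le> n" "1 \<le> s" "s \<le> n" "g > 0"
  shows "real (card {I. I \<subseteq> {1..n} \<and> card I = s \<and>
            real n + real (min k (n - k)) - real s + 2 * g * real n / real s < real (cost x n k s g I)})
         \<le> exp (- 2 * g\<^sup>2 / real s) * real (card {I. I \<subseteq> {1..n} \<and> card I = s})"
proof (cases "real k < real n / 2")
  case True
  then have "min k (n - k) = k"
    by linarith
  with card_costly_samples_small_k[OF assms True] show ?thesis
    by simp
next
  case False
  then have "min k (n - k) = n - k"
    by linarith
  with card_costly_samples_large_k[OF assms False] show ?thesis
    by simp
qed

lemma pmf_of_set_prob_and_expectation_le:
  fixes f :: "'b \<Rightarrow> real"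
  assumes "finite S" "S \<noteq> {}"
    and few: "real (card {I \<in> S. c < f I}) \<le> e * real (card S)"
    and bounded: "\<And>I. I \<in> S \<Longrightarrow> f I \<le> c + M" and "M \<ge> 0"
  shows "measure_pmf.prob (pmf_of_set S) {I. f I \<le> c} \<ge> 1 - e"
    and "measure_pmf.expectation (pmf_of_set S) f \<le> c + M * e"
proof -
  let ?F = "{I \<in> S. c < f I}"
  have "card S > 0"
    using assms(1,2) by (simp add: card_gt_0_iff)
  have "S \<inter> {I. f I \<le> c} = S - ?F"
    by auto
  then have "real (card (S \<inter> {I. f I \<le> c})) = real (card S) - real (card ?F)"
    using assms(1) by (simp add: card_Diff_subset card_mono)
  with few \<open>card S > 0\<close> show "measure_pmf.prob (pmf_of_set S) {I. f I \<le> c} \<ge> 1 - e"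
    using assms(1,2) by (simp add: measure_pmf_of_set field_simps)
  have "(\<Sum>I\<in>S. f I) \<le> (\<Sum>I\<in>S. c + M * of_bool (I \<in> ?F))"
    using bounded \<open>M \<ge> 0\<close> by (intro sum_mono) auto
  also have "\<dots> = real (card S) * c + M * real (card ?F)"
    using assms(1) by (simp add: sum.distrib sum_distrib_left[symmetric] Int_def)
  also have "\<dots> \<le> real (card S) * (c + M * e)"
    using few \<open>M \<ge> 0\<close> by (simp add: algebra_simps mult_left_mono)
  finally show "measure_pmf.expectation (pmf_of_set S) f \<le> c + M * e"
    using assms(1,2) \<open>card S > 0\<close> by (simp add: integral_pmf_of_set field_simps)
qed

theorem lemma3p2:
  fixes x :: "nat \<Rightarrow> 'a::linorder" and n k s :: nat and g :: real
  assumes "n \<ge> 2" and "1 \<le> k" and "k \<le> n" and "1 \<le> s" and "s \<le> n - 1" and "g > 0"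
  defines "cbar \<equiv> real n + real (min k (n - k)) - real s + 2 * g * real n / real s"
  shows "measure_pmf.prob (sample_pmf n s) {I. real (cost x n k s g I) \<le> cbar}
           \<ge> 1 - exp (- 2 * g^2 / real s) \<and>
         measure_pmf.expectation (sample_pmf n s) (\<lambda>I. real (cost x n k s g I))
           \<le> cbar + 2 * real (n - s) * exp (- 2 * g^2 / real s)"
proof -
  define S where "S = {I. I \<subseteq> {1..n} \<and> card I = s}"
  have "s \<le> n"
    using assms(1,5) by linarith
  then have "{1..s} \<in> S"
    unfolding S_def by simp
  then have "S \<noteq> {}"
    by blast
  have "finite S"
    unfolding S_def by simp
  have few: "real (card {I \<in> S. cbar < real (cost x n k s g I)})
             \<le> exp (- 2 * g\<^sup>2 / real s) * real (card S)"
    using card_costly_samples_le[OF assms(2-4) \<open>s \<le> n\<close> assms(6), of x]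
    unfolding S_def cbar_def by simp
  have "cost x n k s g I \<le> 2 * (n - s)" if "I \<in> S" for I
    using that cost_le_twice[OF pivot_u_le_pivot_v[where x = x, OF assms(2-4,6)]] unfolding S_def
    by (auto intro: finite_subset)
  moreover have "0 \<le> cbar"
    using \<open>s \<le> n\<close> assms(6) unfolding cbar_def by simp
  ultimately have bounded: "real (cost x n k s g I) \<le> cbar + 2 * real (n - s)" if "I \<in> S" for I
    using that by (metis add_increasing of_nat_le_iff of_nat_mult of_nat_numeral)
  show ?thesis
    using pmf_of_set_prob_and_expectation_le[OF \<open>finite S\<close> \<open>S \<noteq> {}\<close> few bounded]
    unfolding sample_pmf_def S_def by (simp add: mult_ac)
qed

end
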